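(* If $(a,b)\in R_1\cup R_2$, then $J(a,b)\ge 3/17$.
   Context: For $(a,b)\in\mathbb R^2$ define $f_{a,b}(x_1,x_2)=[b+a(x_1+x_2)+x_1x_2](2-x_1-x_2)$. Let $X_1=\{(x_1,x_2):-1\le x_1\le 0,\ -x_1\le x_2\le 1\}$ and $X_2=\{(x_1,x_2):-1\le x_1\le0,\ x_1\le x_2\le -x_1\}$. Let $\chi_{a,b}=\max_{X_1\cup X_2}f_{a,b}$, $m_{a,b}=\min_{X_1\cup X_2}f_{a,b}$, $R=\{(a,b)\in\mathbb R^2: m_{a,b}>0\}$, and for $(a,b)\in R$ let $J(a,b)=\frac{\chi_{a,b}-m_{a,b}}{\chi_{a,b}+m_{a,b}}$. Whenever $(1-2a)^2\ge3(b-2a)$ let $t_-=\frac{2a-1-\sqrt{(1-2a)^2-3(b-2a)}}{3/2}$. Define $R_1=\{(a,b)\in R:(1-2a)^2<3(b-2a)\}$ and $R_2=\{(a,b)\in R:(1-2a)^2\ge3(b-2a)>0,\ t_-\notin[0,2]\}$. *)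

theory Defs
  imports "HOL-Analysis.Analysis"
begin

definition f_ab :: "real \<Rightarrow> real \<Rightarrow> real \<times> real \<Rightarrow> real" where
  "f_ab a b x = (b + a * (fst x + snd x) + fst x * snd x) * (2 - fst x - snd x)"

definition X1 :: "(real \<times> real) set" where
  "X1 = {(x1, x2). -1 \<le> x1 \<and> x1 \<le> 0 \<and> -x1 \<le> x2 \<and> x2 \<le> 1}"

definition X2 :: "(real \<times> real) set" where
  "X2 = {(x1, x2). -1 \<le> x1 \<and> x1 \<le> 0 \<and> x1 \<le> x2 \<and> x2 \<le> -x1}"

text \<open>Max / min of the continuous function over the compact set X1 \<union> X2
  (they are attained, so Sup/Inf equal max/min).\<close>
definition chi :: "real \<Rightarrow> real \<Rightarrow> real" where
  "chi a b = (SUP x\<in>X1 \<union> X2. f_ab a b x)"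

definition m_ab :: "real \<Rightarrow> real \<Rightarrow> real" where
  "m_ab a b = (INF x\<in>X1 \<union> X2. f_ab a b x)"

definition R :: "(real \<times> real) set" where
  "R = {(a, b). m_ab a b > 0}"

definition J :: "real \<Rightarrow> real \<Rightarrow> real" where
  "J a b = (chi a b - m_ab a b) / (chi a b + m_ab a b)"

definition t_minus :: "real \<Rightarrow> real \<Rightarrow> real" where
  "t_minus a b = (2*a - 1 - sqrt ((1 - 2*a)^2 - 3*(b - 2*a))) / (3/2)"

definition R1 :: "(real \<times> real) set" where
  "R1 = {(a, b). (a, b) \<in> R \<and> (1 - 2*a)^2 < 3*(b - 2*a)}"

definition R2 :: "(real \<times> real) set" where
  "R2 = {(a, b). (a, b) \<in> R \<and> (1 - 2*a)^2 \<ge> 3*(b - 2*a) \<and> 3*(b - 2*a) > 0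
                 \<and> t_minus a b \<notin> {0..2}}"

end

theory Submission
  imports Defs
begin

text \<open>Since \<open>J\<close> is increasing in \<open>\<chi>/m\<close>, the bound \<open>J \<ge> 3/17\<close> means \<open>7\<chi> \<ge> 10m\<close>.
  Evaluating \<open>f\<close> at the corners \<open>(-1,-1)\<close> and \<open>(0,1)\<close> gives \<open>\<chi> \<ge> 4(b - 2a + 1)\<close> and
  \<open>m \<le> a + b\<close>, so it suffices that \<open>18b \<ge> 66a - 28\<close>. On \<open>R\<^sub>1\<close> this follows from
  \<open>3b > 4a\<^sup>2 + 2a + 1\<close> because \<open>12a\<^sup>2 - 27a + 17\<close> has negative discriminant. On \<open>R\<^sub>2\<close>,
  \<open>t\<^sub>- < 0\<close> forces \<open>a < 1/2\<close> (and \<open>b > 2a\<close>), while \<open>t\<^sub>- > 2\<close> forces \<open>a > 2\<close> and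
  \<open>b > 6a - 5\<close>; each case again yields the linear bound.\<close>

lemma compact_X1_Un_X2: "compact (X1 \<union> X2)"
proof -
  have "X1 \<union> X2 = ({-1..0} \<times> {-1..1}) \<inter> {x. fst x \<le> snd x}"
    unfolding X1_def X2_def by auto
  moreover have "closed {x :: real \<times> real. fst x \<le> snd x}"
    by (intro closed_Collect_le continuous_intros)
  ultimately show ?thesis
    by (simp add: compact_Int_closed compact_Times)
qed

lemma bounded_f_ab_image: "bounded (f_ab a b ` (X1 \<union> X2))"
proof -
  have "continuous_on (X1 \<union> X2) (f_ab a b)"
    unfolding f_ab_def by (intro continuous_intros)
  then show ?thesis
    by (intro compact_imp_bounded compact_continuous_image compact_X1_Un_X2)
qed

lemma f_ab_le_chi: "x \<in> X1 \<union> X2 \<Longrightarrow> f_ab a b x \<le> chi a b"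
  unfolding chi_def by (intro cSUP_upper bounded_imp_bdd_above bounded_f_ab_image)

lemma m_ab_le_f_ab: "x \<in> X1 \<union> X2 \<Longrightarrow> m_ab a b \<le> f_ab a b x"
  unfolding m_ab_def by (intro cINF_lower bounded_imp_bdd_below bounded_f_ab_image)

lemma ratio_ge_3_17_iff:
  fixes M m :: real
  assumes "0 < M + m"
  shows "3/17 \<le> (M - m) / (M + m) \<longleftrightarrow> 10 * m \<le> 7 * M"
  using assms by (simp add: field_simps)

lemma t_minus_neg_imp_lt_half:
  assumes "b - 2*a > 0" and "(1 - 2*a)^2 \<ge> 3*(b - 2*a)" and "t_minus a b < 0"
  shows "a < 1/2"
proof (rule ccontr)
  define d where "d = (1 - 2*a)^2 - 3*(b - 2*a)"
  assume "\<not> a < 1/2"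
  moreover have "2*a - 1 < sqrt d"
    using assms(3) unfolding t_minus_def d_def by (simp add: divide_less_0_iff)
  ultimately have "(2*a - 1)^2 < (sqrt d)^2"
    by (intro power_strict_mono) auto
  also have "\<dots> = d"
    using assms(2) unfolding d_def by simp
  finally show False
    using assms(1) unfolding d_def by (simp add: power2_commute)
qed

lemma t_minus_gt_two_bounds:
  assumes "(1 - 2*a)^2 \<ge> 3*(b - 2*a)" and "t_minus a b > 2"
  shows "a > 2" and "b > 6*a - 5"
proof -
  define d where "d = (1 - 2*a)^2 - 3*(b - 2*a)"
  have "0 \<le> d"
    using assms(1) unfolding d_def by simp
  have "sqrt d < 2*a - 4"
    using assms(2) unfolding t_minus_def d_def by (simp add: field_simps)
  then show "a > 2"
    using real_sqrt_ge_zero[OF \<open>0 \<le> d\<close>] by linarith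
  have "d = (sqrt d)^2"
    using \<open>0 \<le> d\<close> by simp
  also have "\<dots> < (2*a - 4)^2"
    using \<open>sqrt d < 2*a - 4\<close> \<open>0 \<le> d\<close> by (intro power_strict_mono) auto
  finally show "b > 6*a - 5"
    unfolding d_def by (simp add: power2_eq_square algebra_simps)
qed

lemma linear_bound_R1:
  assumes "(a, b) \<in> R1"
  shows "18 * b \<ge> 66 * a - 28"
proof -
  have "0 \<le> 12 * (a - 9/8)^2" by simp
  then show ?thesis
    using assms unfolding R1_def by (simp add: power2_eq_square algebra_simps)
qed

lemma linear_bound_R2:
  assumes "(a, b) \<in> R2"
  shows "18 * b \<ge> 66 * a - 28"
proof -
  have disc: "(1 - 2*a)^2 \<ge> 3*(b - 2*a)" and pos: "b - 2*a > 0"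
    and t: "t_minus a b < 0 \<or> t_minus a b > 2"
    using assms unfolding R2_def by auto
  from t show ?thesis
  proof
    assume "t_minus a b < 0"
    then show ?thesis using t_minus_neg_imp_lt_half[OF pos disc] pos by linarith
  next
    assume "t_minus a b > 2"
    then show ?thesis using t_minus_gt_two_bounds[OF disc] by linarith
  qed
qed

theorem propositionA3:
  fixes a b :: real
  assumes "(a, b) \<in> R1 \<union> R2"
  shows "J a b \<ge> 3/17"
proof -
  have corners: "(-1, -1) \<in> X1 \<union> X2" "(0, 1) \<in> X1 \<union> X2"
    unfolding X1_def X2_def by auto
  have chi_ge: "chi a b \<ge> 4 * (b - 2*a + 1)"
    using f_ab_le_chi[OF corners(1), of a b] by (simp add: f_ab_def)
  have m_le: "m_ab a b \<le> a + b"
    using m_ab_le_f_ab[OF corners(2), of a b] by (simp add: f_ab_def)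
  have "m_ab a b > 0"
    using assms unfolding R1_def R2_def R_def by auto
  moreover have "18 * b \<ge> 66 * a - 28"
    using assms linear_bound_R1 linear_bound_R2 by blast
  ultimately have "10 * m_ab a b \<le> 7 * chi a b" "0 < chi a b + m_ab a b"
    using chi_ge m_le by auto
  then show ?thesis
    unfolding J_def using ratio_ge_3_17_iff by blast
qed

end
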